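(* Let $A$ be a finite set of vertices of a graph $\Gamma$. Then there exists a subset $B\subseteq A$ with $|B|\le\tfrac34|A|$ such that $$\operatorname{sw}(A)\le\operatorname{Bisec}(A)+\operatorname{sw}(B).$$
   Context: For disjoint vertex sets $B_1,B_2$, $E(B_1,B_2)$ is the set of edges between them. A sweepout $\mathfrak F$ of a finite vertex set $A$ is a nested sequence $\emptyset=F_0\subseteq F_1\subseteq\dots\subseteq F_{|A|}=A$ with $|F_j|=j$; its width is $\operatorname{w}(\mathfrak F)=\max_j|E(F_j,A\setminus F_j)|$, and $\operatorname{sw}(A)$ is the minimum width over all sweepouts of $A$. $\operatorname{Bisec}(A)=\min|E(B_1,B_2)|$ over all decompositions $A=B_1\sqcup B_2$ with $\tfrac14|A|\le|B_i|\le\tfrac34|A|$ for $i=1,2$ (a minimum over an empty set being $+\infty$). *)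

theory Defs
  imports Complex_Main "HOL-Library.Extended_Nat"
begin

definition edges_between :: "('a \<Rightarrow> 'a \<Rightarrow> bool) \<Rightarrow> 'a set \<Rightarrow> 'a set \<Rightarrow> 'a set set" where
  "edges_between E B1 B2 = {{u, v} | u v. u \<in> B1 \<and> v \<in> B2 \<and> E u v}"

definition sweepout :: "'a set \<Rightarrow> (nat \<Rightarrow> 'a set) \<Rightarrow> bool" where
  "sweepout A F \<longleftrightarrow> F 0 = {} \<and> F (card A) = A \<and>
     (\<forall>j < card A. F j \<subseteq> F (Suc j)) \<and> (\<forall>j \<le> card A. card (F j) = j)"

definition width :: "('a \<Rightarrow> 'a \<Rightarrow> bool) \<Rightarrow> 'a set \<Rightarrow> (nat \<Rightarrow> 'a set) \<Rightarrow> nat" where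
  "width E A F = Max ((\<lambda>j. card (edges_between E (F j) (A - F j))) ` {0..card A})"

definition sw :: "('a \<Rightarrow> 'a \<Rightarrow> bool) \<Rightarrow> 'a set \<Rightarrow> nat" where
  "sw E A = (LEAST w. \<exists>F. sweepout A F \<and> width E A F = w)"

definition Bisec :: "('a \<Rightarrow> 'a \<Rightarrow> bool) \<Rightarrow> 'a set \<Rightarrow> enat" where
  "Bisec E A = (INF P \<in> {(B1, B2). B1 \<union> B2 = A \<and> B1 \<inter> B2 = {} \<and>
        real (card A) / 4 \<le> real (card B1) \<and> real (card B1) \<le> 3 * real (card A) / 4 \<and>
        real (card A) / 4 \<le> real (card B2) \<and> real (card B2) \<le> 3 * real (card A) / 4}.
      enat (card (edges_between E (fst P) (snd P))))"

end

theory Submission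
  imports Defs
begin

text \<open>Split A along an optimal bisection B1, B2 and sweep out B1 completely before B2, each
with an optimal sweepout. Every cut of the concatenated sweepout consists of a cut of one
part plus at most the edges between B1 and B2, so sw A \<le> |E(B1,B2)| + max (sw B1) (sw B2),
and B is taken to be the part with the larger sweepwidth. No property of the edge relation
is needed.\<close>

lemma edges_between_Un_left:
  "edges_between E (X \<union> Y) Z = edges_between E X Z \<union> edges_between E Y Z"
  unfolding edges_between_def by blast

lemma edges_between_Un_right:
  "edges_between E X (Y \<union> Z) = edges_between E X Y \<union> edges_between E X Z"
  unfolding edges_between_def by blast

lemma edges_between_mono:
  "X \<subseteq> X' \<Longrightarrow> Y \<subseteq> Y' \<Longrightarrow> edges_between E X Y \<subseteq> edges_between E X' Y'"
  unfolding edges_between_def by blast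

lemma finite_edges_between:
  assumes "finite X" "finite Y"
  shows "finite (edges_between E X Y)"
proof -
  have "edges_between E X Y \<subseteq> (\<lambda>(u, v). {u, v}) ` (X \<times> Y)"
    unfolding edges_between_def by auto
  then show ?thesis
    using assms by (meson finite_SigmaI finite_imageI finite_subset)
qed

lemma card_edges_between_Un_le:
  "card (edges_between E X (Y \<union> Z)) \<le> card (edges_between E X Y) + card (edges_between E X Z)"
  unfolding edges_between_Un_right by (rule card_Un_le)

lemma card_edges_between_mono:
  assumes "X \<subseteq> X'" "Y \<subseteq> Y'" "finite X'" "finite Y'"
  shows "card (edges_between E X Y) \<le> card (edges_between E X' Y')"
  using assms by (intro card_mono finite_edges_between edges_between_mono)

lemma sweepout_exists:
  assumes "finite A"
  shows "\<exists>F. sweepout A F"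
proof -
  obtain xs where xs: "set xs = A" "distinct xs"
    using assms finite_distinct_list by blast
  then have "sweepout A (\<lambda>j. set (take j xs))"
    unfolding sweepout_def
    by (auto simp: distinct_card set_take_subset_set_take min_def)
  then show ?thesis by blast
qed

lemma sw_attained:
  assumes "finite A"
  shows "\<exists>F. sweepout A F \<and> width E A F = sw E A"
proof -
  obtain F where "sweepout A F" using sweepout_exists[OF assms] ..
  then have "\<exists>w F. sweepout A F \<and> width E A F = w" by blast
  then show ?thesis unfolding sw_def by (rule LeastI_ex)
qed

lemma sw_le_width: "sweepout A F \<Longrightarrow> sw E A \<le> width E A F"
  unfolding sw_def by (rule Least_le) blast

lemma cut_le_width:
  "j \<le> card A \<Longrightarrow> card (edges_between E (F j) (A - F j)) \<le> width E A F"
  unfolding width_def by (rule Max_ge) auto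

lemma width_le:
  "(\<And>j. j \<le> card A \<Longrightarrow> card (edges_between E (F j) (A - F j)) \<le> b) \<Longrightarrow> width E A F \<le> b"
  unfolding width_def by (subst Max_le_iff) auto

lemma sweepout_mono:
  assumes "sweepout A F" "i \<le> j" "j \<le> card A"
  shows "F i \<subseteq> F j"
  using assms(2,3)
proof (induction j)
  case (Suc j)
  show ?case
  proof (cases "i = Suc j")
    case False
    then have "F i \<subseteq> F j" using Suc by simp
    also have "F j \<subseteq> F (Suc j)" using Suc.prems assms(1) unfolding sweepout_def by simp
    finally show ?thesis .
  qed simp
qed simp

lemma sweepout_subset:
  assumes "sweepout A F" "j \<le> card A"
  shows "F j \<subseteq> A"
  using sweepout_mono[OF assms(1) assms(2) order_refl] assms(1) unfolding sweepout_def by simp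

definition sweepout_concat :: "'a set \<Rightarrow> (nat \<Rightarrow> 'a set) \<Rightarrow> (nat \<Rightarrow> 'a set) \<Rightarrow> nat \<Rightarrow> 'a set" where
  "sweepout_concat B1 F1 F2 j = (if j \<le> card B1 then F1 j else B1 \<union> F2 (j - card B1))"

lemma sweepout_concat:
  assumes "finite B1" "finite B2" "B1 \<inter> B2 = {}"
    and F1: "sweepout B1 F1" and F2: "sweepout B2 F2"
  shows "sweepout (B1 \<union> B2) (sweepout_concat B1 F1 F2)"
proof -
  let ?F = "sweepout_concat B1 F1 F2"
  have card_Un: "card (B1 \<union> B2) = card B1 + card B2"
    using assms(1-3) by (rule card_Un_disjoint)
  have F2_finite: "finite (F2 k)" and F2_disjoint: "B1 \<inter> F2 k = {}" if "k \<le> card B2" for k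
    using sweepout_subset[OF F2 that] assms(2,3) finite_subset by blast+
  have "?F (card (B1 \<union> B2)) = B1 \<union> B2"
  proof (cases "card B2 = 0")
    case True
    then have "B2 = {}" using assms(2) by simp
    then show ?thesis using F1 unfolding sweepout_concat_def sweepout_def by simp
  next
    case False
    then show ?thesis using F2 unfolding sweepout_concat_def sweepout_def card_Un by simp
  qed
  moreover have "?F j \<subseteq> ?F (Suc j)" if "j < card (B1 \<union> B2)" for j
  proof (cases "j < card B1")
    case True
    then show ?thesis using F1 unfolding sweepout_concat_def sweepout_def by simp
  next
    case False
    then have "F2 (j - card B1) \<subseteq> F2 (Suc j - card B1)"
      using F2 that unfolding sweepout_def card_Un by (simp add: Suc_diff_le)
    then show ?thesis
      using False F1 sweepout_subset[OF F1] unfolding sweepout_concat_def by auto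
  qed
  moreover have "card (?F j) = j" if "j \<le> card (B1 \<union> B2)" for j
  proof (cases "j \<le> card B1")
    case True
    then show ?thesis using F1 unfolding sweepout_concat_def sweepout_def by simp
  next
    case False
    then have k: "j - card B1 \<le> card B2" using that card_Un by simp
    then have "card (B1 \<union> F2 (j - card B1)) = card B1 + (j - card B1)"
      using card_Un_disjoint[OF assms(1) F2_finite F2_disjoint] F2 unfolding sweepout_def
      by simp
    then show ?thesis using False unfolding sweepout_concat_def by simp
  qed
  ultimately show ?thesis
    using F1 unfolding sweepout_def sweepout_concat_def by simp
qed

lemma card_cut_first_phase:
  assumes "finite B1" "finite B2" "B1 \<inter> B2 = {}" "X \<subseteq> B1"
  shows "card (edges_between E X (B1 \<union> B2 - X))
           \<le> card (edges_between E X (B1 - X)) + card (edges_between E B1 B2)"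
proof -
  have "B1 \<union> B2 - X = (B1 - X) \<union> B2" using assms(3,4) by blast
  then have "card (edges_between E X (B1 \<union> B2 - X))
               \<le> card (edges_between E X (B1 - X)) + card (edges_between E X B2)"
    using card_edges_between_Un_le by simp
  also have "card (edges_between E X B2) \<le> card (edges_between E B1 B2)"
    using card_edges_between_mono[OF assms(4) order_refl assms(1,2)] .
  finally show ?thesis by simp
qed

lemma card_cut_second_phase:
  assumes "finite B1" "finite B2" "B1 \<inter> B2 = {}" "Y \<subseteq> B2"
  shows "card (edges_between E (B1 \<union> Y) (B1 \<union> B2 - (B1 \<union> Y)))
           \<le> card (edges_between E B1 B2) + card (edges_between E Y (B2 - Y))"
proof -
  have "B1 \<union> B2 - (B1 \<union> Y) = B2 - Y" using assms(3,4) by blast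
  then have "card (edges_between E (B1 \<union> Y) (B1 \<union> B2 - (B1 \<union> Y)))
               \<le> card (edges_between E B1 (B2 - Y)) + card (edges_between E Y (B2 - Y))"
    unfolding edges_between_Un_left by (simp add: card_Un_le)
  also have "card (edges_between E B1 (B2 - Y)) \<le> card (edges_between E B1 B2)"
    using card_edges_between_mono[OF order_refl Diff_subset assms(1,2)] .
  finally show ?thesis by simp
qed

lemma width_sweepout_concat_le:
  assumes "finite B1" "finite B2" "B1 \<inter> B2 = {}"
    and F1: "sweepout B1 F1" and F2: "sweepout B2 F2"
  shows "width E (B1 \<union> B2) (sweepout_concat B1 F1 F2)
           \<le> card (edges_between E B1 B2) + max (width E B1 F1) (width E B2 F2)"
proof (rule width_le)
  fix j assume j: "j \<le> card (B1 \<union> B2)"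
  let ?c = "card (edges_between E B1 B2)"
  show "card (edges_between E (sweepout_concat B1 F1 F2 j) (B1 \<union> B2 - sweepout_concat B1 F1 F2 j))
          \<le> ?c + max (width E B1 F1) (width E B2 F2)"
  proof (cases "j \<le> card B1")
    case True
    have "card (edges_between E (F1 j) (B1 \<union> B2 - F1 j))
            \<le> card (edges_between E (F1 j) (B1 - F1 j)) + ?c"
      using card_cut_first_phase[OF assms(1-3) sweepout_subset[OF F1 True]] .
    also have "\<dots> \<le> width E B1 F1 + ?c"
      using cut_le_width[OF True] by simp
    finally show ?thesis using True unfolding sweepout_concat_def by simp
  next
    case False
    let ?k = "j - card B1"
    have k: "?k \<le> card B2"
      using j card_Un_disjoint[OF assms(1-3)] by simp
    have "card (edges_between E (B1 \<union> F2 ?k) (B1 \<union> B2 - (B1 \<union> F2 ?k)))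
            \<le> ?c + card (edges_between E (F2 ?k) (B2 - F2 ?k))"
      using card_cut_second_phase[OF assms(1-3) sweepout_subset[OF F2 k]] .
    also have "\<dots> \<le> ?c + width E B2 F2"
      using cut_le_width[OF k] by simp
    finally show ?thesis using False unfolding sweepout_concat_def by simp
  qed
qed

lemma sw_Un_le:
  assumes "finite B1" "finite B2" "B1 \<inter> B2 = {}"
  shows "sw E (B1 \<union> B2) \<le> card (edges_between E B1 B2) + max (sw E B1) (sw E B2)"
proof -
  obtain F1 where F1: "sweepout B1 F1" "width E B1 F1 = sw E B1"
    using sw_attained[OF assms(1)] by blast
  obtain F2 where F2: "sweepout B2 F2" "width E B2 F2 = sw E B2"
    using sw_attained[OF assms(2)] by blast
  show ?thesis
    using sw_le_width[OF sweepout_concat[OF assms F1(1) F2(1)], of E]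
      width_sweepout_concat_le[OF assms F1(1) F2(1), of E]
    unfolding F1(2) F2(2) by linarith
qed

lemma Bisec_attained:
  assumes "Bisec E A \<noteq> \<infinity>"
  obtains B1 B2 where "B1 \<union> B2 = A" "B1 \<inter> B2 = {}"
    "real (card B1) \<le> 3 * real (card A) / 4" "real (card B2) \<le> 3 * real (card A) / 4"
    "Bisec E A = enat (card (edges_between E B1 B2))"
proof -
  define S where "S = {(B1, B2). B1 \<union> B2 = A \<and> B1 \<inter> B2 = {} \<and>
        real (card A) / 4 \<le> real (card B1) \<and> real (card B1) \<le> 3 * real (card A) / 4 \<and>
        real (card A) / 4 \<le> real (card B2) \<and> real (card B2) \<le> 3 * real (card A) / 4}"
  define V where "V = (\<lambda>P. enat (card (edges_between E (fst P) (snd P)))) ` S"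
  have "Bisec E A = Inf V" unfolding Bisec_def V_def S_def by simp
  moreover from this have "V \<noteq> {}"
    using assms by (auto simp: top_enat_def)
  then have "Inf V \<in> V" unfolding Inf_enat_def by (auto intro: LeastI)
  ultimately obtain B1 B2 where "(B1, B2) \<in> S" "Bisec E A = enat (card (edges_between E B1 B2))"
    unfolding V_def by auto
  then show ?thesis using that unfolding S_def by blast
qed

theorem lemma2p5:
  fixes E :: "'a \<Rightarrow> 'a \<Rightarrow> bool" and A :: "'a set"
  assumes "\<And>u v. E u v \<Longrightarrow> E v u" and "\<And>u. \<not> E u u"
    and "finite A"
  shows "\<exists>B \<subseteq> A. real (card B) \<le> 3 * real (card A) / 4 \<and>
           enat (sw E A) \<le> Bisec E A + enat (sw E B)"
proof (cases "Bisec E A = \<infinity>")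
  case True
  then show ?thesis by (intro exI[of _ "{}"]) simp
next
  case False
  then obtain B1 B2 where part: "B1 \<union> B2 = A" "B1 \<inter> B2 = {}"
      and small: "real (card B1) \<le> 3 * real (card A) / 4" "real (card B2) \<le> 3 * real (card A) / 4"
      and bisec: "Bisec E A = enat (card (edges_between E B1 B2))"
    by (rule Bisec_attained)
  have finite: "finite B1" "finite B2" using part(1) assms(3) by auto
  have "sw E A \<le> card (edges_between E B1 B2) + max (sw E B1) (sw E B2)"
    using sw_Un_le[OF finite part(2), of E] part(1) by simp
  then show ?thesis
    using small part(1) unfolding bisec
    by (cases "sw E B2 \<le> sw E B1") (auto simp: max_def)
qed

end
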